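(* Let $A$ be a Banach algebra which does not consist entirely of right (resp. left) topological divisors of zero. If $A$ has a left (resp. right) approximate identity (not necessarily bounded), then $A$ has a left (resp. right) unit. In particular, if moreover $A$ is commutative, then $A$ is unital. *)

theory Defs
  imports "HOL-Analysis.Analysis"
begin

text \<open>Banach algebras are modelled by the type class combination
  real_normed_algebra + banach (associative, not necessarily unital or commutative,
  with submultiplicative norm, complete).\<close>

definition right_top_zero_divisor :: "'a::real_normed_algebra \<Rightarrow> bool" where
  "right_top_zero_divisor a \<longleftrightarrow>
     (\<exists>z::nat \<Rightarrow> 'a. (\<forall>n. norm (z n) = 1) \<and> (\<lambda>n. z n * a) \<longlonglongrightarrow> 0)"

definition left_top_zero_divisor :: "'a::real_normed_algebra \<Rightarrow> bool" where
  "left_top_zero_divisor a \<longleftrightarrow>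
     (\<exists>z::nat \<Rightarrow> 'a. (\<forall>n. norm (z n) = 1) \<and> (\<lambda>n. a * z n) \<longlonglongrightarrow> 0)"

text \<open>A (not necessarily bounded) left approximate identity: a net (e_i) along a
  proper filter F (nets over directed sets are the special case F = at_top) such that
  e_i x tends to x for every x.\<close>
definition left_approx_identity :: "('i \<Rightarrow> 'a::real_normed_algebra) \<Rightarrow> 'i filter \<Rightarrow> bool" where
  "left_approx_identity e F \<longleftrightarrow> F \<noteq> bot \<and> (\<forall>x. ((\<lambda>i. e i * x) \<longlongrightarrow> x) F)"

definition right_approx_identity :: "('i \<Rightarrow> 'a::real_normed_algebra) \<Rightarrow> 'i filter \<Rightarrow> bool" where
  "right_approx_identity e F \<longleftrightarrow> F \<noteq> bot \<and> (\<forall>x. ((\<lambda>i. x * e i) \<longlongrightarrow> x) F)"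

end

theory Submission
  imports Defs
begin

text \<open>If a is not a right topological divisor of zero, right multiplication by a is
  bounded below, \<open>c \<parallel>z\<parallel> \<le> \<parallel>z a\<parallel>\<close>. A map that is bounded below on a Banach space has
  closed range, so the limit a of the net \<open>e\<^sub>i a\<close> is of the form \<open>u a\<close>, and then
  \<open>\<parallel>e\<^sub>i - u\<parallel> \<le> \<parallel>e\<^sub>i a - a\<parallel> / c\<close> shows that the approximate identity itself converges to u.
  Passing to the limit in \<open>e\<^sub>i x \<rightarrow> x\<close> gives \<open>u x = x\<close>.\<close>

lemma bounded_below_if_no_unit_null_sequence:
  fixes T :: "'a::real_normed_vector \<Rightarrow> 'b::real_normed_vector"
  assumes "linear T"
    and no_null: "\<not> (\<exists>z::nat \<Rightarrow> 'a. (\<forall>n. norm (z n) = 1) \<and> (\<lambda>n. T (z n)) \<longlonglongrightarrow> 0)"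
  shows "\<exists>c>0. \<forall>z. c * norm z \<le> norm (T z)"
proof (rule ccontr)
  assume "\<not> ?thesis"
  then have small: "\<exists>z. norm (T z) < c * norm z" if "c > 0" for c
    using that by (meson not_le)
  have "\<exists>w. norm w = 1 \<and> norm (T w) < 1 / real (Suc n)" for n
  proof -
    obtain z where z: "norm (T z) < norm z / real (Suc n)"
      using small[of "1 / real (Suc n)"] by auto
    then have "norm z > 0"
      using norm_ge_zero[of "T z"] by (smt (verit) divide_nonpos_pos of_nat_0_less_iff zero_less_Suc)
    then show ?thesis
      using z by (intro exI[of _ "(1 / norm z) *\<^sub>R z"])
        (simp add: linear_scale[OF \<open>linear T\<close>] divide_less_eq field_simps)
  qed
  then obtain w where w: "\<And>n. norm (w n) = 1" "\<And>n. norm (T (w n)) < 1 / real (Suc n)"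
    by metis
  have "(\<lambda>n. T (w n)) \<longlonglongrightarrow> 0"
    by (rule LIMSEQ_norm_0) (use w in auto)
  with w(1) no_null show False by blast
qed

lemma tendsto_of_bounded_below_image:
  fixes T :: "'a::banach \<Rightarrow> 'b::real_normed_vector"
  assumes T: "bounded_linear T" and "c > 0" and below: "\<And>z. c * norm z \<le> norm (T z)"
    and "F \<noteq> bot" and lim: "((\<lambda>i. T (e i)) \<longlongrightarrow> a) F"
  shows "\<exists>u. (e \<longlongrightarrow> u) F"
proof -
  interpret bounded_linear T by (fact T)
  have "complete (range T)"
    using below by (intro complete_isometric_image[OF \<open>c > 0\<close> subspace_UNIV T _ complete_UNIV]) simp
  then have "a \<in> range T"
    by (intro Lim_in_closed_set[OF complete_imp_closed _ \<open>F \<noteq> bot\<close> lim]) simp_all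
  then obtain u where "T u = a" by blast
  have dist_bound: "norm (norm (e i - u)) \<le> norm (T (e i) - a) / c" for i
    using below[of "e i - u"] \<open>c > 0\<close> \<open>T u = a\<close> by (simp add: diff le_divide_eq mult.commute)
  have "((\<lambda>i. norm (T (e i) - a) / c) \<longlongrightarrow> 0) F"
    using lim by (intro tendsto_divide_zero tendsto_norm_zero) (simp only: LIM_zero_iff)
  then have "((\<lambda>i. norm (e i - u)) \<longlongrightarrow> 0) F"
    by (rule Lim_null_comparison[OF always_eventually[OF allI[OF dist_bound]]])
  then have "(e \<longlongrightarrow> u) F"
    by (simp add: tendsto_norm_zero_iff LIM_zero_iff)
  then show ?thesis by blast
qed

lemma left_unit_if_left_approx_identity:
  fixes a :: "'a::{real_normed_algebra, banach}" and e :: "'i \<Rightarrow> 'a"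
  assumes "\<not> right_top_zero_divisor a" and "left_approx_identity e F"
  shows "\<exists>u::'a. \<forall>x. u * x = x"
proof -
  have F: "F \<noteq> bot" and approx: "\<And>x. ((\<lambda>i. e i * x) \<longlongrightarrow> x) F"
    using \<open>left_approx_identity e F\<close> by (auto simp: left_approx_identity_def)
  have mult_a: "bounded_linear (\<lambda>z. z * a)"
    by (rule bounded_linear_mult_left)
  obtain c where "c > 0" "\<And>z. c * norm z \<le> norm (z * a)"
    using bounded_below_if_no_unit_null_sequence[OF bounded_linear.linear[OF mult_a]]
      \<open>\<not> right_top_zero_divisor a\<close> by (auto simp: right_top_zero_divisor_def)
  then obtain u where "(e \<longlongrightarrow> u) F"
    using tendsto_of_bounded_below_image[OF mult_a _ _ F approx] by blast
  have "u * x = x" for x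
    using tendsto_unique[OF F tendsto_mult_right[OF \<open>(e \<longlongrightarrow> u) F\<close>] approx] .
  then show ?thesis by blast
qed

lemma right_unit_if_right_approx_identity:
  fixes a :: "'a::{real_normed_algebra, banach}" and e :: "'i \<Rightarrow> 'a"
  assumes "\<not> left_top_zero_divisor a" and "right_approx_identity e F"
  shows "\<exists>u::'a. \<forall>x. x * u = x"
proof -
  have F: "F \<noteq> bot" and approx: "\<And>x. ((\<lambda>i. x * e i) \<longlongrightarrow> x) F"
    using \<open>right_approx_identity e F\<close> by (auto simp: right_approx_identity_def)
  have mult_a: "bounded_linear (\<lambda>z. a * z)"
    by (rule bounded_linear_mult_right)
  obtain c where "c > 0" "\<And>z. c * norm z \<le> norm (a * z)"
    using bounded_below_if_no_unit_null_sequence[OF bounded_linear.linear[OF mult_a]]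
      \<open>\<not> left_top_zero_divisor a\<close> by (auto simp: left_top_zero_divisor_def)
  then obtain u where "(e \<longlongrightarrow> u) F"
    using tendsto_of_bounded_below_image[OF mult_a _ _ F approx] by blast
  have "x * u = x" for x
    using tendsto_unique[OF F tendsto_mult_left[OF \<open>(e \<longlongrightarrow> u) F\<close>] approx] .
  then show ?thesis by blast
qed

theorem mainTheorem5:
  fixes e_type :: "'i itself"
    and a_type :: "'a::{real_normed_algebra, banach} itself"
  shows
   "((\<not> (\<forall>a::'a. right_top_zero_divisor a)) \<and>
        (\<exists>(e::'i \<Rightarrow> 'a) F. left_approx_identity e F)
      \<longrightarrow> (\<exists>u::'a. \<forall>x. u * x = x))
    \<and> ((\<not> (\<forall>a::'a. left_top_zero_divisor a)) \<and>
        (\<exists>(e::'i \<Rightarrow> 'a) F. right_approx_identity e F)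
      \<longrightarrow> (\<exists>u::'a. \<forall>x. x * u = x))
    \<and> ((\<forall>x y::'a. x * y = y * x) \<and> (\<not> (\<forall>a::'a. right_top_zero_divisor a)) \<and>
        (\<exists>(e::'i \<Rightarrow> 'a) F. left_approx_identity e F)
      \<longrightarrow> (\<exists>u::'a. \<forall>x. u * x = x \<and> x * u = x))"
proof (intro conjI impI)
  assume "(\<not> (\<forall>a::'a. right_top_zero_divisor a)) \<and> (\<exists>(e::'i \<Rightarrow> 'a) F. left_approx_identity e F)"
  then show "\<exists>u::'a. \<forall>x. u * x = x"
    using left_unit_if_left_approx_identity by blast
next
  assume "(\<not> (\<forall>a::'a. left_top_zero_divisor a)) \<and> (\<exists>(e::'i \<Rightarrow> 'a) F. right_approx_identity e F)"
  then show "\<exists>u::'a. \<forall>x. x * u = x"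
    using right_unit_if_right_approx_identity by blast
next
  assume comm_and_left: "(\<forall>x y::'a. x * y = y * x) \<and> (\<not> (\<forall>a::'a. right_top_zero_divisor a)) \<and>
    (\<exists>(e::'i \<Rightarrow> 'a) F. left_approx_identity e F)"
  then obtain u :: 'a where "\<forall>x. u * x = x"
    using left_unit_if_left_approx_identity by blast
  with comm_and_left show "\<exists>u::'a. \<forall>x. u * x = x \<and> x * u = x"
    by metis
qed

end
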